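(* Let $P$ be a finite set of points in $\mathbb{R}^2$ in general position. Let $(u,v)$ be adjacent vertices of the convex hull of $P$, let $t$ be the other neighbor of $u$ on the hull, and let $p\in A(u)\setminus A(v)$. If $v$ is deleted from $P$, and $v'$ denotes the new neighbor of $u$ on the convex hull of $P\setminus\{v\}$ (replacing $v$), then $p$ lies in the triangle $\triangle(t,u,v')$, i.e. $p$ remains within $u$'s triangle.
   Context: For consecutive hull vertices $(t,u,v)$, $u$'s triangle is $\triangle(t,u,v)$. Convex layers: $L^1$ is the set of vertices of the convex hull of $P$, $L^2$ the set of vertices of the convex hull of $P\setminus L^1$. A point $p$ is active for $u\in L^1$ if, upon deleting $u$ and recomputing the first and second convex layers, $p$ moves to the first layer; $A(u)$ is the set of points active for $u$. *)

theory Defs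
  imports "HOL-Analysis.Analysis"
begin

type_synonym point = "real \<times> real"

definition general_position :: "point set \<Rightarrow> bool" where
  "general_position P \<longleftrightarrow>
     (\<forall>a\<in>P. \<forall>b\<in>P. \<forall>c\<in>P. a \<noteq> b \<and> a \<noteq> c \<and> b \<noteq> c \<longrightarrow> \<not> collinear {a, b, c})"

definition layer1 :: "point set \<Rightarrow> point set" where
  "layer1 P = {p \<in> P. p extreme_point_of (convex hull P)}"

definition layer2 :: "point set \<Rightarrow> point set" where
  "layer2 P = layer1 (P - layer1 P)"

definition hull_adjacent :: "point set \<Rightarrow> point \<Rightarrow> point \<Rightarrow> bool" where
  "hull_adjacent P u v \<longleftrightarrow> u \<in> layer1 P \<and> v \<in> layer1 P \<and> u \<noteq> v \<and>
     closed_segment u v face_of convex hull P"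

definition active :: "point set \<Rightarrow> point \<Rightarrow> point \<Rightarrow> bool" where
  "active P u p \<longleftrightarrow> u \<in> layer1 P \<and> p \<in> layer2 P \<and> p \<in> layer1 (P - {u})"

definition active_set :: "point set \<Rightarrow> point \<Rightarrow> point set" where
  "active_set P u = {p. active P u p}"

end

theory Submission
  imports Defs
begin

text \<open>
  The two hull edges at \<open>u\<close> that survive the deletion of \<open>v\<close>, namely \<open>tu\<close> (an edge of the
  hull of \<open>P\<close>) and \<open>uv'\<close> (an edge of the hull of \<open>P - {v}\<close>), confine every point of
  \<open>P - {v}\<close> to the angle at \<open>u\<close> spanned by \<open>t\<close> and \<open>v'\<close>. If \<open>p\<close> were outside the triangle
  \<open>tuv'\<close>, the segment from \<open>u\<close> to \<open>p\<close> would cross the side \<open>tv'\<close> at a point \<open>q\<close>. Since \<open>p\<close>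
  is not a vertex of the hull of \<open>P - {v}\<close>, it lies on a segment from \<open>u\<close> to a point \<open>r\<close> of
  the hull of the remaining points; then \<open>p\<close> lies between \<open>q\<close> and \<open>r\<close>, both of which avoid
  \<open>u\<close> and \<open>p\<close>, so \<open>p\<close> could not become a hull vertex once \<open>u\<close> is deleted, contradicting
  \<open>p \<in> A(u)\<close>.
\<close>

lemma affine_hull_noncollinear_plane:
  fixes a b c :: "'a::euclidean_space"
  assumes "DIM('a) = 2" "\<not> collinear {a, b, c}"
  shows "affine hull {a, b, c} = UNIV"
proof -
  have "aff_dim {a, b, c} \<ge> 2" using assms(2) collinear_aff_dim by force
  moreover have "aff_dim {a, b, c} \<le> 2" using aff_dim_le_DIM[of "{a, b, c}"] assms(1) by simp
  ultimately show ?thesis using aff_dim_eq_full[of "{a, b, c}"] assms(1) by simp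
qed

lemma plane_barycentric_coordinates:
  fixes a b c x :: "'a::euclidean_space"
  assumes "DIM('a) = 2" "\<not> collinear {a, b, c}"
  obtains \<alpha> \<beta> \<gamma> where "\<alpha> + \<beta> + \<gamma> = 1" "x = \<alpha> *\<^sub>R a + \<beta> *\<^sub>R b + \<gamma> *\<^sub>R c"
  using affine_hull_noncollinear_plane[OF assms] affine_hull_3[of a b c] by blast

lemma barycentric_coordinate_nonneg:
  fixes a b c x w :: "'a::real_inner"
  assumes "x = \<alpha> *\<^sub>R a + \<beta> *\<^sub>R b + \<gamma> *\<^sub>R c" "\<alpha> + \<beta> + \<gamma> = 1"
    and "w \<bullet> b = w \<bullet> a" "w \<bullet> c < w \<bullet> a" "w \<bullet> x \<le> w \<bullet> a"
  shows "0 \<le> \<gamma>"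
proof -
  have "\<alpha> + \<beta> = 1 - \<gamma>" using assms(2) by simp
  have "w \<bullet> x = (\<alpha> + \<beta>) * (w \<bullet> a) + \<gamma> * (w \<bullet> c)"
    using assms(1,3) by (simp add: inner_add_right distrib_right)
  also have "\<dots> = w \<bullet> a + \<gamma> * (w \<bullet> c - w \<bullet> a)"
    unfolding \<open>\<alpha> + \<beta> = 1 - \<gamma>\<close> by (simp add: algebra_simps)
  finally have "\<gamma> * (w \<bullet> c - w \<bullet> a) \<le> 0" using assms(5) by simp
  then show ?thesis using assms(4) by (simp add: mult_le_0_iff)
qed

lemma closed_segment_crosses_opposite_side:
  fixes a b c x :: "'a::real_vector"
  assumes "x = \<alpha> *\<^sub>R a + \<beta> *\<^sub>R b + \<gamma> *\<^sub>R c" "\<alpha> + \<beta> + \<gamma> = 1"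
    and "0 \<le> \<beta>" "0 \<le> \<gamma>" "\<alpha> < 0"
  obtains q where "q \<in> closed_segment b c" "q \<in> closed_segment a x"
proof
  define s where "s = \<beta> + \<gamma>"
  have s: "1 < s" using assms(2,5) by (simp add: s_def)
  define q where "q = (\<beta> / s) *\<^sub>R b + (\<gamma> / s) *\<^sub>R c"
  have "q = (1 - \<gamma> / s) *\<^sub>R b + (\<gamma> / s) *\<^sub>R c"
    using s by (simp add: q_def s_def field_simps)
  moreover have "0 \<le> \<gamma> / s" "\<gamma> / s \<le> 1" using s assms(3,4) by (auto simp: s_def)
  ultimately show "q \<in> closed_segment b c" by (auto simp: in_segment)
  have x: "x = (1 - s) *\<^sub>R a + s *\<^sub>R q"
    using s assms(1,2) by (simp add: q_def s_def scaleR_add_right)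
  have "q = (1 / s) *\<^sub>R (s *\<^sub>R q)" using s by simp
  also have "\<dots> = (1 / s) *\<^sub>R (x - (1 - s) *\<^sub>R a)" using x by simp
  also have "\<dots> = (1 - 1 / s) *\<^sub>R a + (1 / s) *\<^sub>R x"
    using s by (simp add: scaleR_diff_right diff_divide_distrib algebra_simps)
  finally have "q = (1 - 1 / s) *\<^sub>R a + (1 / s) *\<^sub>R x" .
  moreover have "0 \<le> 1 / s" "1 / s \<le> 1" using s by auto
  ultimately show "q \<in> closed_segment a x" unfolding in_segment by blast
qed

lemma extreme_point_of_convex_hull_iff:
  fixes S :: "'a::euclidean_space set"
  assumes "finite S" "x \<in> S"
  shows "x extreme_point_of convex hull S \<longleftrightarrow> x \<notin> convex hull (S - {x})"
proof
  assume "x extreme_point_of convex hull S"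
  then have "convex (convex hull S - {x})"
    using extreme_point_of_stillconvex[of "convex hull S"] by simp
  moreover have "S - {x} \<subseteq> convex hull S - {x}"
    using hull_subset[of S convex] by blast
  ultimately show "x \<notin> convex hull (S - {x})"
    using hull_minimal[of "S - {x}" "convex hull S - {x}" convex] by blast
next
  assume "x \<notin> convex hull (S - {x})"
  then show "x extreme_point_of convex hull S"
    using extreme_point_of_convex_hull_insert[of "S - {x}" x] assms by (simp add: insert_absorb)
qed

lemma closed_segment_from_deleted_point_avoids_hull:
  fixes p :: "'a::euclidean_space"
  assumes "p \<in> convex hull (S - {p})" "p \<notin> convex hull (S - {u, p})"
    and "q \<in> closed_segment u p"
  shows "q \<notin> convex hull (S - {u, p})"
proof
  assume q: "q \<in> convex hull (S - {u, p})"
  then have "S - {u, p} \<noteq> {}" by (metis convex_hull_empty empty_iff)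
  moreover have "S - {p} \<subseteq> insert u (S - {u, p})" by blast
  ultimately obtain r where r: "r \<in> convex hull (S - {u, p})" "p \<in> closed_segment u r"
    using assms(1) hull_mono[of "S - {p}" "insert u (S - {u, p})" convex]
    by (auto simp: convex_hull_insert_segments)
  have "p \<in> closed_segment q r"
    using between_trans_2[of u r p q] r(2) assms(3)
    by (simp add: between_mem_segment closed_segment_commute)
  then have "p \<in> convex hull (S - {u, p})"
    using q r(1) convex_contains_segment[of "convex hull (S - {u, p})"] by blast
  then show False using assms(2) by blast
qed

lemma layer1_subset: "layer1 P \<subseteq> P"
  by (auto simp: layer1_def)

lemma layer1_iff_notin_convex_hull:
  "finite P \<Longrightarrow> p \<in> P \<Longrightarrow> p \<in> layer1 P \<longleftrightarrow> p \<notin> convex hull (P - {p})"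
  by (simp add: layer1_def extreme_point_of_convex_hull_iff)

lemma general_positionD:
  "general_position P \<Longrightarrow> a \<in> P \<Longrightarrow> b \<in> P \<Longrightarrow> c \<in> P \<Longrightarrow> a \<noteq> b \<Longrightarrow> a \<noteq> c \<Longrightarrow> b \<noteq> c
    \<Longrightarrow> \<not> collinear {a, b, c}"
  unfolding general_position_def by blast

lemma general_position_subset:
  "general_position P \<Longrightarrow> Q \<subseteq> P \<Longrightarrow> general_position Q"
  unfolding general_position_def by blast

lemma hull_edge_strict_support:
  assumes "finite P" "general_position P" "hull_adjacent P a b"
  obtains w where "w \<bullet> b = w \<bullet> a" "\<forall>x\<in>P. w \<bullet> x \<le> w \<bullet> a"
    "\<forall>x\<in>P - {a, b}. w \<bullet> x < w \<bullet> a"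
proof -
  have ab: "a \<in> P" "b \<in> P" "a \<noteq> b" "closed_segment a b face_of convex hull P"
    using assms(3) layer1_subset by (auto simp: hull_adjacent_def)
  then have "closed_segment a b exposed_face_of convex hull P"
    using exposed_face_of_polyhedron[OF polyhedron_convex_hull[OF assms(1)]] by blast
  then obtain w c where le: "convex hull P \<subseteq> {x. w \<bullet> x \<le> c}"
    and eq: "closed_segment a b = convex hull P \<inter> {x. w \<bullet> x = c}"
    unfolding exposed_face_of_def by blast
  have c: "w \<bullet> a = c" "w \<bullet> b = c" using eq by blast+
  have le_P: "w \<bullet> x \<le> c" if "x \<in> P" for x
    using le hull_inc[OF that] by blast
  have lt_P: "w \<bullet> x < c" if "x \<in> P - {a, b}" for x
  proof -
    have "\<not> collinear {a, x, b}"
      using general_positionD[OF assms(2), of a x b] ab(1-3) that by auto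
    then have "x \<notin> closed_segment a b"
      using between_imp_collinear by (auto simp: between_mem_segment)
    then have "w \<bullet> x \<noteq> c" using eq hull_inc[of x P] that by blast
    moreover have "w \<bullet> x \<le> c" using le_P that by blast
    ultimately show ?thesis by simp
  qed
  show thesis by (rule that) (use c le_P lt_P in auto)
qed

lemma hull_vertex_angle_coordinates:
  fixes P :: "point set"
  assumes "finite P" "general_position P"
    and "hull_adjacent P t u" "hull_adjacent (P - {v}) u v'" "t \<noteq> v" "v' \<noteq> t"
    and "x \<in> P - {v}"
  obtains \<alpha> \<beta> \<gamma> where "\<alpha> + \<beta> + \<gamma> = 1" "x = \<alpha> *\<^sub>R u + \<beta> *\<^sub>R t + \<gamma> *\<^sub>R v'"
    "0 \<le> \<beta>" "0 \<le> \<gamma>"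
proof -
  have Pv: "finite (P - {v})" "general_position (P - {v})"
    using assms(1,2) general_position_subset by auto
  have "u \<in> P" "t \<in> P" "t \<noteq> u" "v' \<in> P" "v' \<noteq> v" "v' \<noteq> u"
    using assms(3,4) layer1_subset by (auto simp: hull_adjacent_def)
  have "\<not> collinear {u, t, v'}"
    using general_positionD[OF assms(2), of u t v'] \<open>u \<in> P\<close> \<open>t \<in> P\<close> \<open>v' \<in> P\<close>
      \<open>t \<noteq> u\<close> \<open>v' \<noteq> u\<close> assms(6) by auto
  then obtain \<alpha> \<beta> \<gamma> where bary: "\<alpha> + \<beta> + \<gamma> = 1" "x = \<alpha> *\<^sub>R u + \<beta> *\<^sub>R t + \<gamma> *\<^sub>R v'"
    using plane_barycentric_coordinates[of u t v' x] by auto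
  obtain w1 where w1: "w1 \<bullet> u = w1 \<bullet> t" "\<forall>y\<in>P. w1 \<bullet> y \<le> w1 \<bullet> t"
      "\<forall>y\<in>P - {t, u}. w1 \<bullet> y < w1 \<bullet> t"
    using hull_edge_strict_support[OF assms(1,2,3)] by blast
  obtain w3 where w3: "w3 \<bullet> v' = w3 \<bullet> u" "\<forall>y\<in>P - {v}. w3 \<bullet> y \<le> w3 \<bullet> u"
      "\<forall>y\<in>P - {v} - {u, v'}. w3 \<bullet> y < w3 \<bullet> u"
    using hull_edge_strict_support[OF Pv assms(4)] by blast
  have "0 \<le> \<gamma>"
  proof (rule barycentric_coordinate_nonneg[OF bary(2,1)])
    show "w1 \<bullet> t = w1 \<bullet> u" by (simp add: w1(1))
    show "w1 \<bullet> v' < w1 \<bullet> u" using w1(1,3) \<open>v' \<in> P\<close> \<open>v' \<noteq> u\<close> assms(6) by auto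
    show "w1 \<bullet> x \<le> w1 \<bullet> u" using w1(1,2) assms(7) by auto
  qed
  moreover have "0 \<le> \<beta>"
  proof (rule barycentric_coordinate_nonneg)
    show "x = \<alpha> *\<^sub>R u + \<gamma> *\<^sub>R v' + \<beta> *\<^sub>R t" using bary(2) by (simp add: algebra_simps)
    show "\<alpha> + \<gamma> + \<beta> = 1" using bary(1) by simp
    show "w3 \<bullet> v' = w3 \<bullet> u" by (fact w3(1))
    show "w3 \<bullet> t < w3 \<bullet> u" using w3(3) \<open>t \<in> P\<close> \<open>t \<noteq> u\<close> assms(5,6) by auto
    show "w3 \<bullet> x \<le> w3 \<bullet> u" using w3(2) assms(7) by blast
  qed
  ultimately show thesis using that bary by blast
qed

lemma active_set_diff_convex_hull:
  assumes "finite P" "p \<in> active_set P u - active_set P v" "u \<in> layer1 P" "v \<in> layer1 P"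
  shows "p \<in> P - layer1 P" "p \<notin> layer1 (P - {v})"
    and "p \<in> convex hull (P - {v} - {p})" "p \<notin> convex hull (P - {v} - {u, p})"
proof -
  have p: "p \<in> P" "p \<notin> layer1 P" "p \<in> layer1 (P - {u})" "p \<notin> layer1 (P - {v})"
    using assms(2,4) layer1_subset by (auto simp: active_set_def active_def layer2_def)
  then show "p \<in> P - layer1 P" "p \<notin> layer1 (P - {v})" by auto
  have "p \<noteq> u" "p \<noteq> v" using p(2) assms(3,4) by auto
  then show "p \<in> convex hull (P - {v} - {p})"
    using layer1_iff_notin_convex_hull[of "P - {v}" p] assms(1) p(1,4) by auto
  have "p \<notin> convex hull (P - {u} - {p})"
    using layer1_iff_notin_convex_hull[of "P - {u}" p] assms(1) p(1,3) \<open>p \<noteq> u\<close> by auto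
  then show "p \<notin> convex hull (P - {v} - {u, p})"
    using hull_mono[of "P - {v} - {u, p}" "P - {u} - {p}" convex] by auto
qed

theorem lemma2:
  fixes P :: "point set" and t u v v' p :: point
  assumes "finite P"
    and "general_position P"
    and "hull_adjacent P u v"
    and "hull_adjacent P t u"
    and "t \<noteq> v"
    and "p \<in> active_set P u - active_set P v"
    and "hull_adjacent (P - {v}) u v'"
    and "v' \<noteq> t"
  shows "p \<in> convex hull {t, u, v'}"
proof -
  have u: "u \<in> layer1 P" and v: "v \<in> layer1 P" and t: "t \<in> layer1 P" "t \<noteq> u"
    and v': "v' \<in> layer1 (P - {v})" "v' \<noteq> u"
    using assms(3,4,7) by (auto simp: hull_adjacent_def)
  note p = active_set_diff_convex_hull[OF assms(1,6) u v]
  obtain \<alpha> \<beta> \<gamma> where bary: "\<alpha> + \<beta> + \<gamma> = 1" "p = \<alpha> *\<^sub>R u + \<beta> *\<^sub>R t + \<gamma> *\<^sub>R v'"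
    and "0 \<le> \<beta>" "0 \<le> \<gamma>"
    using hull_vertex_angle_coordinates[OF assms(1,2,4,7,5,8), of p] p(1) v by blast
  show ?thesis
  proof (cases "0 \<le> \<alpha>")
    case True
    then show ?thesis
      unfolding convex_hull_3 using bary \<open>0 \<le> \<beta>\<close> \<open>0 \<le> \<gamma>\<close>
      by (intro CollectI exI[of _ \<beta>] exI[of _ \<alpha>] exI[of _ \<gamma>]) (auto simp: algebra_simps)
  next
    case False
    then obtain q where q: "q \<in> closed_segment t v'" "q \<in> closed_segment u p"
      using closed_segment_crosses_opposite_side[OF bary(2,1)] \<open>0 \<le> \<beta>\<close> \<open>0 \<le> \<gamma>\<close> by auto
    have "{t, v'} \<subseteq> P - {v} - {u, p}"
      using t v' p(1,2) assms(5) layer1_subset by auto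
    then have "closed_segment t v' \<subseteq> convex hull (P - {v} - {u, p})"
      unfolding segment_convex_hull by (rule hull_mono)
    then show ?thesis
      using q closed_segment_from_deleted_point_avoids_hull[OF p(3,4)] by blast
  qed
qed

end
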